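(* Let $H$ be as in the setting, invariant under $R$ and under at least one of $F$, $V$. Then every eigenfunction of $H(\vec k^* )$ belonging to $\mathcal X_1(\vec k^* )\oplus\mathcal X_2(\vec k^* )$ (these carry the degenerate eigenvalues, i.e. the common eigenvalues of the isospectral operators $Q_1$, $Q_2$) and which is continuous vanishes at the center of the hexagonal fundamental domain $\Omega_H$, i.e. at the origin.
   Context: Hexagonal lattice: $\vec a_1=(\sqrt3/2,1/2)^T$, $\vec a_2=(\sqrt3/2,-1/2)^T$, $\Gamma=\{n_1\vec a_1+n_2\vec a_2:n_1,n_2\in\mathbb Z\}$. $\mathcal X(\vec k)$ is the space of $\psi\in L^2_{\rm loc}(\mathbb R^2)$ with $\psi(\vec x+n_1\vec a_1+n_2\vec a_2)=e^{i(n_1k_1+n_2k_2)}\psi(\vec x)$. $\Omega_H$ is the hexagonal fundamental domain (Voronoi cell) of $\Gamma$ centered at the origin. $\vec k^*=(2\pi/3,-2\pi/3)$, $\tau=e^{2\pi i/3}$. Symmetries: $R\psi(x_1,x_2)=\psi(-\tfrac12x_1+\tfrac{\sqrt3}2x_2,-\tfrac{\sqrt3}2x_1-\tfrac12x_2)$, $V\psi(\vec x)=\psi(-\vec x)$, $F\psi(x_1,x_2)=\psi(-x_1,x_2)$. $\mathcal X_j(\vec k^* )=\{\psi\in\mathcal X(\vec k^* ):R\psi=\tau^{-j}\psi\}$; $Q_j$ denotes the restriction of $H(\vec k^* )$ to $\mathcal X_j(\vec k^* )$ (realized on one third of $\Omega_H$). Setting: $H$ is a self-adjoint operator on functions on $\mathbb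 R^2$ (e.g. $-\Delta+q$ with real $\Gamma$-periodic $q$) commuting with translations by $\Gamma$ and with complex conjugation; $H(\vec k)$ is its restriction to $\mathcal X(\vec k)$. *)

theory Defs
  imports "HOL-Analysis.Analysis"
begin

type_synonym pt = "real \<times> real"
type_synonym fn = "pt \<Rightarrow> complex"

definition a1 :: pt where "a1 = (sqrt 3 / 2, 1 / 2)"
definition a2 :: pt where "a2 = (sqrt 3 / 2, - 1 / 2)"

definition latpt :: "int \<Rightarrow> int \<Rightarrow> pt" where
  "latpt n1 n2 = of_int n1 *\<^sub>R a1 + of_int n2 *\<^sub>R a2"

definition Gamma :: "pt set" where
  "Gamma = {latpt n1 n2 | n1 n2. True}"

definition Omega_H :: "pt set" where
  "Omega_H = {x. \<forall>g\<in>Gamma. norm x \<le> norm (x - g)}"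

definition L2loc :: "fn \<Rightarrow> bool" where
  "L2loc \<psi> \<longleftrightarrow> \<psi> \<in> borel_measurable lborel \<and>
     (\<forall>K. compact K \<longrightarrow> set_integrable lborel K (\<lambda>x. (norm (\<psi> x))\<^sup>2))"

text \<open>The space X(k) (functions are L2_loc, so quasi-periodicity holds almost everywhere).\<close>
definition Xk :: "pt \<Rightarrow> fn \<Rightarrow> bool" where
  "Xk k \<psi> \<longleftrightarrow> L2loc \<psi> \<and>
     (\<forall>n1 n2. AE x in lborel.
        \<psi> (x + latpt n1 n2) = cis (of_int n1 * fst k + of_int n2 * snd k) * \<psi> x)"

definition kstar :: pt where "kstar = (2 * pi / 3, - 2 * pi / 3)"

definition tau :: complex where "tau = cis (2 * pi / 3)"

definition Rop :: "fn \<Rightarrow> fn" where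
  "Rop \<psi> = (\<lambda>(x1, x2). \<psi> (- (1/2) * x1 + sqrt 3 / 2 * x2, - (sqrt 3 / 2) * x1 - (1/2) * x2))"

definition Vop :: "fn \<Rightarrow> fn" where
  "Vop \<psi> = (\<lambda>x. \<psi> (- x))"

definition Fop :: "fn \<Rightarrow> fn" where
  "Fop \<psi> = (\<lambda>(x1, x2). \<psi> (- x1, x2))"

definition Xj :: "nat \<Rightarrow> fn \<Rightarrow> bool" where
  "Xj j \<psi> \<longleftrightarrow> Xk kstar \<psi> \<and> (AE x in lborel. Rop \<psi> x = inverse tau ^ j * \<psi> x)"

definition ipH :: "fn \<Rightarrow> fn \<Rightarrow> complex" where
  "ipH f g = set_lebesgue_integral lborel Omega_H (\<lambda>x. f x * cnj (g x))"

definition lin_op :: "(fn \<Rightarrow> fn) \<Rightarrow> fn set \<Rightarrow> bool" where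
  "lin_op H D \<longleftrightarrow> (\<lambda>x. 0) \<in> D \<and>
     (\<forall>f\<in>D. \<forall>g\<in>D. \<forall>a b::complex. (\<lambda>x. a * f x + b * g x) \<in> D \<and>
        (AE x in lborel. H (\<lambda>y. a * f y + b * g y) x = a * H f x + b * H g x))"

definition commutes_with :: "(fn \<Rightarrow> fn) \<Rightarrow> fn set \<Rightarrow> (fn \<Rightarrow> fn) \<Rightarrow> bool" where
  "commutes_with H D S \<longleftrightarrow>
     (\<forall>\<psi>\<in>D. S \<psi> \<in> D \<and> (AE x in lborel. H (S \<psi>) x = S (H \<psi>) x))"

definition transl :: "pt \<Rightarrow> fn \<Rightarrow> fn" where
  "transl g \<psi> = (\<lambda>x. \<psi> (x + g))"

definition conjop :: "fn \<Rightarrow> fn" where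
  "conjop \<psi> = (\<lambda>x. cnj (\<psi> x))"

text \<open>H(k), the restriction of H to X(k), is self-adjoint on L2(Omega_H):
  it maps D \<inter> X(k) into X(k), and its adjoint coincides with it
  (same domain, same action up to a.e. equality).\<close>
definition Hk_selfadjoint :: "(fn \<Rightarrow> fn) \<Rightarrow> fn set \<Rightarrow> pt \<Rightarrow> bool" where
  "Hk_selfadjoint H D k \<longleftrightarrow>
     (\<forall>\<psi>. \<psi> \<in> D \<and> Xk k \<psi> \<longrightarrow> Xk k (H \<psi>)) \<and>
     (\<forall>\<phi>. Xk k \<phi> \<longrightarrow> (\<phi> \<in> D \<longleftrightarrow>
          (\<exists>g. Xk k g \<and> (\<forall>\<psi>. \<psi> \<in> D \<and> Xk k \<psi> \<longrightarrow> ipH (H \<psi>) \<phi> = ipH \<psi> g)))) \<and>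
     (\<forall>\<phi> g. \<phi> \<in> D \<and> Xk k \<phi> \<and> Xk k g \<and>
          (\<forall>\<psi>. \<psi> \<in> D \<and> Xk k \<psi> \<longrightarrow> ipH (H \<psi>) \<phi> = ipH \<psi> g)
          \<longrightarrow> (AE x in lborel. H \<phi> x = g x))"

definition eigenfunction_Hk :: "(fn \<Rightarrow> fn) \<Rightarrow> fn set \<Rightarrow> pt \<Rightarrow> fn \<Rightarrow> bool" where
  "eigenfunction_Hk H D k \<psi> \<longleftrightarrow> \<psi> \<in> D \<and> Xk k \<psi> \<and> \<not> (AE x in lborel. \<psi> x = 0) \<and>
     (\<exists>ev::complex. AE x in lborel. H \<psi> x = ev * \<psi> x)"

end

theory Submission
  imports Defs
begin

text \<open>
  Let rho be the rotation by 2 pi/3 with R psi = psi o rho. A component psi_j in X_j(k*)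
  satisfies psi_j o rho = tau^(-j) psi_j almost everywhere, so for j = 1, 2 the orbit sum
  psi_j + psi_j o rho + psi_j o rho^2 equals (1 + tau^(-j) + tau^(-2j)) psi_j = 0.
  Hence psi + psi o rho + psi o rho^2 vanishes almost everywhere, so everywhere when psi is
  continuous, and at the fixed point 0 of rho this reads 3 psi(0) = 0.
\<close>

lemma primitive_cube_root_sum:
  fixes z :: "'a::idom"
  assumes "z ^ 3 = 1" "z \<noteq> 1"
  shows "1 + z + z\<^sup>2 = 0"
proof -
  have "(z - 1) * (1 + z + z\<^sup>2) = z ^ 3 - 1"
    by (simp add: algebra_simps power2_eq_square power3_eq_cube)
  with assms show ?thesis by simp
qed

lemma primitive_cube_root_sum_square:
  fixes z :: "'a::idom"
  assumes "z ^ 3 = 1" "z \<noteq> 1"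
  shows "1 + z\<^sup>2 + (z\<^sup>2)\<^sup>2 = 0"
proof -
  have "(z\<^sup>2)\<^sup>2 = z ^ 3 * z" by (simp add: power_numeral_reduce)
  with assms primitive_cube_root_sum[OF assms] show ?thesis
    by (simp add: algebra_simps)
qed

lemma tau_cube: "tau ^ 3 = 1"
proof -
  have "tau ^ 3 = cis (2 * pi / 3 + 2 * pi / 3 + 2 * pi / 3)"
    unfolding tau_def power3_eq_cube by (simp only: cis_mult)
  then show ?thesis by simp
qed

lemma tau_neq_1: "tau \<noteq> 1"
proof
  assume "tau = 1"
  then have "Re tau = 1" by simp
  then show False by (simp add: tau_def cos_120)
qed

lemma AE_lebesgue_comp_Lipschitz_left_inverse:
  fixes g h :: "'a::euclidean_space \<Rightarrow> 'a"
  assumes ae: "AE x in lebesgue. P x"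
    and left_inv: "\<And>x. h (g x) = x"
    and Lipschitz: "\<And>x y. norm (h y - h x) \<le> B * norm (y - x)"
  shows "AE x in lebesgue. P (g x)"
proof -
  obtain N where N: "{x \<in> space lebesgue. \<not> P x} \<subseteq> N" "N \<in> null_sets lebesgue"
    by (rule AE_E[OF ae]) blast
  have "negligible (h ` N)"
    using N(2) Lipschitz
    by (intro negligible_locally_Lipschitz_image) (auto simp: negligible_iff_null_sets)
  moreover have "{x \<in> space lebesgue. \<not> P (g x)} \<subseteq> h ` N"
    using N(1) left_inv by (force intro: rev_image_eqI)
  ultimately show ?thesis
    by (auto simp: negligible_iff_null_sets intro: AE_I')
qed

lemma continuous_AE_eq_const:
  fixes f :: "'a::euclidean_space \<Rightarrow> 'b::t2_space"
  assumes cont: "continuous_on UNIV f" and ae: "AE x in lebesgue. f x = c"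
  shows "f x = c"
proof (rule ccontr)
  assume "f x \<noteq> c"
  then have nonempty: "{y. f y \<noteq> c} \<noteq> {}" by blast
  have "open {y. f y \<noteq> c}"
    using cont by (intro open_Collect_neq continuous_intros)
  moreover obtain N where "{y \<in> space lebesgue. f y \<noteq> c} \<subseteq> N" "N \<in> null_sets lebesgue"
    by (rule AE_E[OF ae]) blast
  then have "{y. f y \<noteq> c} \<subseteq> N" "negligible N"
    by (auto simp: negligible_iff_null_sets)
  then have "negligible {y. f y \<noteq> c}"
    by (rule negligible_subset[rotated])
  ultimately show False
    using open_not_negligible nonempty by blast
qed

definition rho :: "pt \<Rightarrow> pt" where
  "rho x = (- (1/2) * fst x + sqrt 3 / 2 * snd x, - (sqrt 3 / 2) * fst x - (1/2) * snd x)"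

lemma Rop_eq_comp_rho: "Rop f x = f (rho x)"
  by (cases x) (simp add: Rop_def rho_def)

lemma rho_zero [simp]: "rho 0 = 0"
  by (simp add: rho_def zero_prod_def)

lemma rho_diff: "rho y - rho x = rho (y - x)"
  by (simp add: rho_def prod_eq_iff field_simps)

lemma norm_rho [simp]: "norm (rho x) = norm x"
proof -
  have "(- (1/2) * a + sqrt 3 / 2 * b)\<^sup>2 + (- (sqrt 3 / 2) * a - (1/2) * b)\<^sup>2 = a\<^sup>2 + b\<^sup>2"
    for a b :: real
    by (simp add: power2_eq_square algebra_simps)
  then show ?thesis
    by (cases x) (simp add: rho_def norm_Pair)
qed

lemma rho_rho_rho [simp]: "rho (rho (rho x)) = x"
  by (cases x) (simp add: rho_def algebra_simps)

lemma continuous_on_rho: "continuous_on UNIV rho"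
  unfolding rho_def by (intro continuous_intros)

lemma AE_lebesgue_comp_rho:
  assumes "AE x in lebesgue. P x"
  shows "AE x in lebesgue. P (rho x)"
  using assms
  by (rule AE_lebesgue_comp_Lipschitz_left_inverse[where h = "rho \<circ> rho" and B = 1])
     (simp_all add: rho_diff)

lemma Xj_AE_comp_rho:
  assumes "Xj j \<phi>"
  shows "AE x in lebesgue. \<phi> (rho x) = inverse tau ^ j * \<phi> x"
  using assms unfolding Xj_def by (auto simp: Rop_eq_comp_rho intro: AE_completion)

lemma X1_X2_rotation_orbit_sum_AE:
  assumes X1: "Xj 1 \<psi>1" and X2: "Xj 2 \<psi>2"
    and sum: "AE x in lborel. \<psi> x = \<psi>1 x + \<psi>2 x"
  shows "AE x in lebesgue. \<psi> x + \<psi> (rho x) + \<psi> (rho (rho x)) = 0"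
proof -
  define c where "c = inverse tau"
  have c_cube: "c ^ 3 = 1" and c_neq_1: "c \<noteq> 1"
    using tau_cube tau_neq_1 by (auto simp: c_def power_inverse)
  have sum': "AE x in lebesgue. \<psi> x = \<psi>1 x + \<psi>2 x"
    using sum by (rule AE_completion)
  have R1: "AE x in lebesgue. \<psi>1 (rho x) = c * \<psi>1 x"
    and R2: "AE x in lebesgue. \<psi>2 (rho x) = c\<^sup>2 * \<psi>2 x"
    using Xj_AE_comp_rho[OF X1] Xj_AE_comp_rho[OF X2] by (simp_all add: c_def)
  show ?thesis
    using sum' AE_lebesgue_comp_rho[OF sum'] AE_lebesgue_comp_rho[OF AE_lebesgue_comp_rho[OF sum']]
      R1 R2 AE_lebesgue_comp_rho[OF R1] AE_lebesgue_comp_rho[OF R2]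
  proof eventually_elim
    case (elim x)
    then have "\<psi> x + \<psi> (rho x) + \<psi> (rho (rho x))
        = (1 + c + c\<^sup>2) * \<psi>1 x + (1 + c\<^sup>2 + (c\<^sup>2)\<^sup>2) * \<psi>2 x"
      by (simp add: algebra_simps power2_eq_square)
    then show ?case
      using primitive_cube_root_sum[OF c_cube c_neq_1]
        primitive_cube_root_sum_square[OF c_cube c_neq_1] by simp
  qed
qed

theorem mainTheorem8:
  fixes H :: "fn \<Rightarrow> fn" and D :: "fn set" and \<psi> :: fn
  assumes lin: "lin_op H D"
    and sa: "\<forall>k. Hk_selfadjoint H D k"
    and transl_inv: "\<forall>g\<in>Gamma. commutes_with H D (transl g)"
    and conj_inv: "commutes_with H D conjop"
    and R_inv: "commutes_with H D Rop"
    and FV_inv: "commutes_with H D Fop \<or> commutes_with H D Vop"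
    and eig: "eigenfunction_Hk H D kstar \<psi>"
    and sum12: "\<exists>\<psi>1 \<psi>2. Xj 1 \<psi>1 \<and> Xj 2 \<psi>2 \<and> (AE x in lborel. \<psi> x = \<psi>1 x + \<psi>2 x)"
    and cont: "continuous_on UNIV \<psi>"
  shows "\<psi> (0, 0) = 0"
proof -
  have orbit_sum_AE: "AE x in lebesgue. \<psi> x + \<psi> (rho x) + \<psi> (rho (rho x)) = 0"
    using sum12 X1_X2_rotation_orbit_sum_AE by blast
  have "continuous_on UNIV (\<lambda>x. \<psi> x + \<psi> (rho x) + \<psi> (rho (rho x)))"
    using cont continuous_on_rho
    by (intro continuous_intros continuous_on_compose2[OF cont]) (auto intro: continuous_on_compose2)
  from continuous_AE_eq_const[OF this orbit_sum_AE, of 0]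
  have "3 * \<psi> 0 = 0" by simp
  then show ?thesis by (simp add: zero_prod_def)
qed

end
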